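(* Let $M=(S,\mathrm{Act},P)$ be an MDP, $T\subseteq S$, $\mathrm{rew}\colon S\to\mathbb{R}_{\ge0}$, $\mathrm{opt}\in\{\min,\max\}$. Let $(x,r)\in[0,\infty]^S\times\mathbb{N}_\infty^S$ satisfy: (1) $\tilde D^{\overline{\mathrm{opt}}}(r)\le r$; (2) $x\le E^{\mathrm{opt}}(x)$; (3) for all $s\in S$, $x(s)=\infty$ implies $r(s)<\infty$ (inequalities pointwise). Then $\mathbb{E}^{\mathrm{opt}}_s(\Diamond T)\ge x(s)$ for all $s\in S$.
   Context: An MDP is a tuple $M=(S,\mathrm{Act},P)$ with $S$ finite, $\mathrm{Act}$ finite, $P\colon S\times\mathrm{Act}\times S\to[0,1]$ with $\sum_{s'}P(s,a,s')\in\{0,1\}$; $\mathrm{Act}(s)=\{a\mid\sum_{s'}P(s,a,s')=1\}$ is nonempty for all $s$; $\mathrm{Post}(s,a)=\{s'\mid P(s,a,s')>0\}$. A strategy is $\sigma\colon S\to\mathrm{Act}$ with $\sigma(s)\in\mathrm{Act}(s)$, inducing a Markov chain with transitions $P(s,\sigma(s),\cdot)$. $\overline{\min}=\max$, $\overline{\max}=\min$. For an infinite path $s_0s_1\ldots$, the accumulated reward is $\sum_{k=0}^{n-1}\mathrm{rew}(s_k)$ with $n=\min\{i\mid s_i\in T\}$ if $T$ is visited, and $\infty$ otherwise; $\mathbb{E}^\sigma_s(\Diamond T)$ is its expectation under $\sigma$ from $s$, $\mathbb{E}^{\mathrm{opt}}_s(\Diamond T)=\mathrm{opt}_\sigma\mathbb{E}^\sigma_s(\Diamond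 T)$. $E^{\mathrm{opt}}(x)(s)=0$ for $s\in T$ and $\mathrm{rew}(s)+\mathrm{opt}_{a\in\mathrm{Act}(s)}\sum_{s'\in\mathrm{Post}(s,a)}P(s,a,s')x(s')$ for $s\notin T$, with $p\cdot\infty=\infty$ for $p>0$, $a+\infty=\infty$. $\mathbb{N}_\infty=\mathbb{N}\cup\{\infty\}$. For $\mathrm{opt}'\in\{\min,\max\}$, the complementary distance operator is $\tilde D^{\mathrm{opt}'}(r)(s)=\infty$ for $s\in T$ and $\mathrm{opt}'_{a\in\mathrm{Act}(s)}\big(\min_{s'\in\mathrm{Post}(s,a)}r(s')+[\exists u,v\in\mathrm{Post}(s,a)\colon r(u)\ne r(v)]\big)$ for $s\notin T$, where $[\varphi]\in\{0,1\}$ is the Iverson bracket and $\infty+1=\infty$. *)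

theory Defs
  imports "HOL-Analysis.Analysis" "HOL-Library.Extended_Nat"
begin

text \<open>An MDP over a finite state type 's and finite action type 'a is given by
  its transition function P.  Act(s) = enabled actions.\<close>

definition enabled :: "('s::finite \<Rightarrow> 'a::finite \<Rightarrow> 's \<Rightarrow> real) \<Rightarrow> 's \<Rightarrow> 'a \<Rightarrow> bool" where
  "enabled P s a \<longleftrightarrow> (\<Sum>s'\<in>UNIV. P s a s') = 1"

definition Post :: "('s::finite \<Rightarrow> 'a::finite \<Rightarrow> 's \<Rightarrow> real) \<Rightarrow> 's \<Rightarrow> 'a \<Rightarrow> 's set" where
  "Post P s a = {s'. P s a s' > 0}"

definition is_mdp :: "('s::finite \<Rightarrow> 'a::finite \<Rightarrow> 's \<Rightarrow> real) \<Rightarrow> bool" where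
  "is_mdp P \<longleftrightarrow> (\<forall>s a s'. 0 \<le> P s a s' \<and> P s a s' \<le> 1)
     \<and> (\<forall>s a. (\<Sum>s'\<in>UNIV. P s a s') \<in> {0, 1})
     \<and> (\<forall>s. \<exists>a. enabled P s a)"

definition strategies :: "('s::finite \<Rightarrow> 'a::finite \<Rightarrow> 's \<Rightarrow> real) \<Rightarrow> ('s \<Rightarrow> 'a) set" where
  "strategies P = {\<sigma>. \<forall>s. enabled P s (\<sigma> s)}"

datatype opt = OMin | OMax

fun dual :: "opt \<Rightarrow> opt" where
  "dual OMin = OMax" | "dual OMax = OMin"

definition opt_over :: "opt \<Rightarrow> 'b set \<Rightarrow> ('b \<Rightarrow> 'c::complete_lattice) \<Rightarrow> 'c" where
  "opt_over o' A f = (case o' of OMin \<Rightarrow> (INF a\<in>A. f a) | OMax \<Rightarrow> (SUP a\<in>A. f a))"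

definition reach_paths :: "'s set \<Rightarrow> 's \<Rightarrow> 's list set" where
  "reach_paths T s = {p. p \<noteq> [] \<and> hd p = s \<and> last p \<in> T \<and> (\<forall>i < length p - 1. p ! i \<notin> T)}"

definition path_prob :: "('s \<Rightarrow> 'a \<Rightarrow> 's \<Rightarrow> real) \<Rightarrow> ('s \<Rightarrow> 'a) \<Rightarrow> 's list \<Rightarrow> real" where
  "path_prob P \<sigma> p = (\<Prod>i < length p - 1. P (p ! i) (\<sigma> (p ! i)) (p ! Suc i))"

definition path_rew :: "('s \<Rightarrow> real) \<Rightarrow> 's list \<Rightarrow> real" where
  "path_rew rew p = (\<Sum>i < length p - 1. rew (p ! i))"

definition reach_prob :: "('s::finite \<Rightarrow> 'a::finite \<Rightarrow> 's \<Rightarrow> real) \<Rightarrow> 's set \<Rightarrow> ('s \<Rightarrow> 'a) \<Rightarrow> 's \<Rightarrow> ennreal" where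
  "reach_prob P T \<sigma> s = (\<integral>\<^sup>+ p. ennreal (path_prob P \<sigma> p) \<partial>count_space (reach_paths T s))"

text \<open>Expected accumulated reward until reaching T (reward is \<infinity> on paths not
  visiting T, so the expectation is \<infinity> whenever T is missed with positive probability).\<close>
definition exp_rew :: "('s::finite \<Rightarrow> 'a::finite \<Rightarrow> 's \<Rightarrow> real) \<Rightarrow> 's set \<Rightarrow> ('s \<Rightarrow> real) \<Rightarrow> ('s \<Rightarrow> 'a) \<Rightarrow> 's \<Rightarrow> ennreal" where
  "exp_rew P T rew \<sigma> s =
     (if reach_prob P T \<sigma> s < 1 then \<infinity>
      else (\<integral>\<^sup>+ p. ennreal (path_prob P \<sigma> p) * ennreal (path_rew rew p) \<partial>count_space (reach_paths T s)))"

definition exp_opt :: "('s::finite \<Rightarrow> 'a::finite \<Rightarrow> 's \<Rightarrow> real) \<Rightarrow> 's set \<Rightarrow> ('s \<Rightarrow> real) \<Rightarrow> opt \<Rightarrow> 's \<Rightarrow> ennreal" where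
  "exp_opt P T rew o' s = opt_over o' (strategies P) (\<lambda>\<sigma>. exp_rew P T rew \<sigma> s)"

definition E_op :: "('s::finite \<Rightarrow> 'a::finite \<Rightarrow> 's \<Rightarrow> real) \<Rightarrow> 's set \<Rightarrow> ('s \<Rightarrow> real) \<Rightarrow> opt \<Rightarrow> ('s \<Rightarrow> ennreal) \<Rightarrow> 's \<Rightarrow> ennreal" where
  "E_op P T rew o' x s =
     (if s \<in> T then 0
      else ennreal (rew s) + opt_over o' {a. enabled P s a}
             (\<lambda>a. \<Sum>s'\<in>Post P s a. ennreal (P s a s') * x s'))"

definition D_op :: "('s::finite \<Rightarrow> 'a::finite \<Rightarrow> 's \<Rightarrow> real) \<Rightarrow> 's set \<Rightarrow> opt \<Rightarrow> ('s \<Rightarrow> enat) \<Rightarrow> 's \<Rightarrow> enat" where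
  "D_op P T o' r s =
     (if s \<in> T then \<infinity>
      else opt_over o' {a. enabled P s a}
             (\<lambda>a. Min (r ` Post P s a)
                  + (if \<exists>u\<in>Post P s a. \<exists>v\<in>Post P s a. r u \<noteq> r v then 1 else 0)))"

end

theory Submission
  imports Defs
begin

text \<open>
  It suffices to bound x by the expected reward under every strategy (opt = min), respectively
  under one strategy (opt = max), that picks in every state an action witnessing (1) where r is
  finite and (2) where r is infinite. If T is missed with positive probability the expected
  reward is infinite. Otherwise T is reached almost surely from every state reachable before T,
  so no set of such states avoiding T can be closed under the transitions of the strategy. Applied
  to the reachable states of minimal rank, which by (1) keep all their successors at that rank,
  this shows that r is infinite on all reachable states; hence x is finite there by (3). The
  expected reward satisfies the Bellman equation of the strategy and x the inequality (2), so
  their difference is superharmonic, and the same argument forces its minimum to be attained in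
  T, where both vanish.
\<close>

lemma path_prob_Cons:
  "p \<noteq> [] \<Longrightarrow> path_prob P \<sigma> (s # p) = P s (\<sigma> s) (hd p) * path_prob P \<sigma> p"
  unfolding path_prob_def
  by (cases p) (simp_all del: prod.lessThan_Suc add: prod.lessThan_Suc_shift)

lemma path_rew_Cons:
  "p \<noteq> [] \<Longrightarrow> path_rew rew (s # p) = rew s + path_rew rew p"
  unfolding path_rew_def
  by (cases p) (simp_all del: sum.lessThan_Suc add: sum.lessThan_Suc_shift)

lemma path_rew_nonneg: "(\<And>s. 0 \<le> rew s) \<Longrightarrow> 0 \<le> path_rew rew p"
  unfolding path_rew_def by (intro sum_nonneg) auto

lemma reach_paths_target: "s \<in> T \<Longrightarrow> reach_paths T s = {[s]}"
  by (auto simp: reach_paths_def neq_Nil_conv nth_Cons' split: if_splits)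

lemma reach_paths_nontarget:
  assumes "s \<notin> T"
  shows "reach_paths T s = (\<Union>s'. (#) s ` reach_paths T s')"
proof (intro set_eqI iffI)
  fix p assume p: "p \<in> reach_paths T s"
  then obtain q where q: "p = s # q" "q \<noteq> []"
    using assms by (cases p) (auto simp: reach_paths_def split: if_splits)
  have "q \<in> reach_paths T (hd q)"
    using p q by (auto simp: reach_paths_def)
      (metis Suc_mono less_diff_conv add_Suc_right nth_Cons_Suc add_0_right)
  then show "p \<in> (\<Union>s'. (#) s ` reach_paths T s')" using q by auto
next
  fix p assume "p \<in> (\<Union>s'. (#) s ` reach_paths T s')"
  then show "p \<in> reach_paths T s"
    using assms by (auto simp: reach_paths_def nth_Cons' less_diff_conv split: if_splits)
qed

lemma nn_integral_reach_paths_nontarget: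
  assumes "s \<notin> T"
  shows "(\<integral>\<^sup>+ p. F p \<partial>count_space (reach_paths T s))
       = (\<Sum>s'\<in>UNIV. \<integral>\<^sup>+ p. F (s # p) \<partial>count_space (reach_paths T (s'::'s::finite)))"
proof -
  have disj: "disjoint_family (\<lambda>s'. (#) s ` reach_paths T s')"
    unfolding disjoint_family_on_def reach_paths_def by auto
  have "(\<integral>\<^sup>+ p. F p \<partial>count_space (reach_paths T s))
      = (\<integral>\<^sup>+ p. F p * indicator (\<Union>s'. (#) s ` reach_paths T s') p \<partial>count_space UNIV)"
    unfolding reach_paths_nontarget[OF assms] by (rule nn_integral_count_space_indicator) simp
  also have "\<dots> = (\<integral>\<^sup>+ p. (\<Sum>s'\<in>UNIV. F p * indicator ((#) s ` reach_paths T s') p)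
                      \<partial>count_space UNIV)"
    by (intro nn_integral_cong) (simp add: indicator_UN_disjoint[OF _ disj] sum_distrib_left)
  also have "\<dots> = (\<Sum>s'\<in>UNIV. \<integral>\<^sup>+ p. F p * indicator ((#) s ` reach_paths T s') p \<partial>count_space UNIV)"
    by (rule nn_integral_sum) simp
  also have "\<dots> = (\<Sum>s'\<in>UNIV. \<integral>\<^sup>+ p. F p \<partial>count_space ((#) s ` reach_paths T s'))"
    by (simp add: nn_integral_count_space_indicator)
  also have "\<dots> = (\<Sum>s'\<in>UNIV. \<integral>\<^sup>+ p. F (s # p) \<partial>count_space (reach_paths T s'))"
    by (intro sum.cong refl nn_integral_bij_count_space[symmetric]) (auto simp: bij_betw_def)
  finally show ?thesis .
qed

lemma nn_integral_reach_paths_target: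
  "s \<in> T \<Longrightarrow> (\<integral>\<^sup>+ p. F p \<partial>count_space (reach_paths T s)) = F [s]"
  by (simp add: reach_paths_target nn_integral_count_space_finite)

definition partial_exp_rew ::
    "('s::finite \<Rightarrow> 'a::finite \<Rightarrow> 's \<Rightarrow> real) \<Rightarrow> 's set \<Rightarrow> ('s \<Rightarrow> real) \<Rightarrow> ('s \<Rightarrow> 'a) \<Rightarrow> 's \<Rightarrow> ennreal" where
  "partial_exp_rew P T rew \<sigma> s =
     (\<integral>\<^sup>+ p. ennreal (path_prob P \<sigma> p) * ennreal (path_rew rew p) \<partial>count_space (reach_paths T s))"

lemma exp_rew_eq_partial_exp_rew:
  "reach_prob P T \<sigma> s = 1 \<Longrightarrow> exp_rew P T rew \<sigma> s = partial_exp_rew P T rew \<sigma> s"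
  by (simp add: exp_rew_def partial_exp_rew_def)

definition D_action :: "('s::finite \<Rightarrow> 'a::finite \<Rightarrow> 's \<Rightarrow> real) \<Rightarrow> ('s \<Rightarrow> enat) \<Rightarrow> 's \<Rightarrow> 'a \<Rightarrow> enat" where
  "D_action P r s a = Min (r ` Post P s a)
     + (if \<exists>u\<in>Post P s a. \<exists>v\<in>Post P s a. r u \<noteq> r v then 1 else 0)"

definition next_exp ::
    "('s::finite \<Rightarrow> 'a::finite \<Rightarrow> 's \<Rightarrow> real) \<Rightarrow> ('s \<Rightarrow> ennreal) \<Rightarrow> 's \<Rightarrow> 'a \<Rightarrow> ennreal" where
  "next_exp P x s a = (\<Sum>s'\<in>Post P s a. ennreal (P s a s') * x s')"

lemma D_op_nontarget:
  "s \<notin> T \<Longrightarrow> D_op P T o' r s = opt_over o' {a. enabled P s a} (D_action P r s)"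
  by (simp add: D_op_def D_action_def[abs_def])

lemma E_op_nontarget:
  "s \<notin> T \<Longrightarrow> E_op P T rew o' x s = ennreal (rew s) + opt_over o' {a. enabled P s a} (next_exp P x s)"
  by (simp add: E_op_def next_exp_def[abs_def])

definition certifying_action ::
    "('s::finite \<Rightarrow> 'a::finite \<Rightarrow> 's \<Rightarrow> real) \<Rightarrow> 's set \<Rightarrow> ('s \<Rightarrow> real) \<Rightarrow> ('s \<Rightarrow> ennreal) \<Rightarrow> ('s \<Rightarrow> enat)
      \<Rightarrow> 's \<Rightarrow> 'a \<Rightarrow> bool" where
  "certifying_action P T rew x r u a \<longleftrightarrow>
     (r u < \<infinity> \<longrightarrow> D_action P r u a \<le> r u) \<and>
     (u \<notin> T \<longrightarrow> r u = \<infinity> \<longrightarrow> x u \<le> ennreal (rew u) + next_exp P x u a)"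

lemma certifying_action_OMin:
  assumes "D_op P T OMax r u \<le> r u" "x u \<le> E_op P T rew OMin x u" "enabled P u a"
  shows "certifying_action P T rew x r u a"
proof -
  have "D_action P r u a \<le> r u" if "r u < \<infinity>"
  proof -
    have "u \<notin> T"
      using assms(1) that by (auto simp: D_op_def)
    then have "D_action P r u a \<le> D_op P T OMax r u"
      using assms(3) by (simp add: D_op_nontarget opt_over_def SUP_upper)
    then show ?thesis
      using assms(1) by (rule order_trans)
  qed
  moreover have "x u \<le> ennreal (rew u) + next_exp P x u a" if "u \<notin> T"
  proof -
    have "E_op P T rew OMin x u \<le> ennreal (rew u) + next_exp P x u a"
      using assms(3) that by (simp add: E_op_nontarget opt_over_def INF_lower add_left_mono)
    with assms(2) show ?thesis
      by (rule order_trans)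
  qed
  ultimately show ?thesis
    by (simp add: certifying_action_def)
qed

lemma D_action_gt:
  assumes "\<And>w. w \<in> Post P s a \<Longrightarrow> k \<le> r w" and "v \<in> Post P s a" and "k < r v"
  shows "k < D_action P r s a"
proof (cases "\<exists>u\<in>Post P s a. \<exists>w\<in>Post P s a. r u \<noteq> r w")
  case True
  have "k \<le> Min (r ` Post P s a)"
    using assms(1,2) by (auto intro: Min.boundedI)
  moreover have "k < \<infinity>"
    using assms(3) by (cases k) auto
  ultimately have "k < Min (r ` Post P s a) + 1"
    by (cases k; cases "Min (r ` Post P s a)") (simp_all add: one_enat_def)
  then show ?thesis
    using True by (simp add: D_action_def)
next
  case False
  then have "D_action P r s a = Min (r ` Post P s a)"
    unfolding D_action_def by (simp only: if_False add_0_right)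
  also have "r ` Post P s a = {r v}"
    using False assms(2) by blast
  finally show ?thesis
    using assms(3) by (simp only: Min_singleton)
qed

lemma opt_over_attained:
  fixes f :: "'b \<Rightarrow> 'c::complete_linorder"
  assumes "finite A" "A \<noteq> {}"
  shows "\<exists>a\<in>A. opt_over o' A f = f a"
proof (cases o')
  case OMin
  then have "opt_over o' A f = Min (f ` A)"
    using assms by (simp add: opt_over_def Min_Inf)
  moreover have "Min (f ` A) \<in> f ` A"
    using assms by simp
  ultimately show ?thesis by auto
next
  case OMax
  then have "opt_over o' A f = Max (f ` A)"
    using assms by (simp add: opt_over_def Max_Sup)
  moreover have "Max (f ` A) \<in> f ` A"
    using assms by simp
  ultimately show ?thesis by auto
qed

lemma partial_exp_rew_target: "s \<in> T \<Longrightarrow> partial_exp_rew P T rew \<sigma> s = 0"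
  by (simp add: partial_exp_rew_def nn_integral_reach_paths_target path_rew_def)

text \<open>Paths with at most n states, i.e. T is reached within n - 1 steps.\<close>

definition reach_prob_within ::
    "('s::finite \<Rightarrow> 'a::finite \<Rightarrow> 's \<Rightarrow> real) \<Rightarrow> 's set \<Rightarrow> ('s \<Rightarrow> 'a) \<Rightarrow> nat \<Rightarrow> 's \<Rightarrow> ennreal" where
  "reach_prob_within P T \<sigma> n s =
     (\<integral>\<^sup>+ p. ennreal (path_prob P \<sigma> p) * indicator {p. length p \<le> n} p
        \<partial>count_space (reach_paths T s))"

locale mdp =
  fixes P :: "'s::finite \<Rightarrow> 'a::finite \<Rightarrow> 's \<Rightarrow> real"
  assumes is_mdp: "is_mdp P"
begin

lemma P_nonneg: "0 \<le> P s a s'"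
  using is_mdp by (simp add: is_mdp_def)

lemma path_prob_nonneg: "0 \<le> path_prob P \<sigma> p"
  unfolding path_prob_def by (intro prod_nonneg) (simp add: P_nonneg)

lemma sum_P_le_1: "(\<Sum>s'\<in>UNIV. P s a s') \<le> 1"
proof -
  have "(\<Sum>s'\<in>UNIV. P s a s') \<in> {0, 1}"
    using is_mdp by (simp add: is_mdp_def)
  then show ?thesis by auto
qed

lemma enabled_sum_Post:
  assumes "enabled P s a"
  shows "(\<Sum>s'\<in>Post P s a. P s a s') = 1"
proof -
  have "(\<Sum>s'\<in>Post P s a. P s a s') = (\<Sum>s'\<in>UNIV. P s a s')"
    by (rule sum.mono_neutral_left) (auto simp: Post_def order.strict_iff_order P_nonneg)
  with assms show ?thesis
    by (simp add: enabled_def)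
qed

lemma next_exp_eq_sum_UNIV: "next_exp P f s a = (\<Sum>s'\<in>UNIV. ennreal (P s a s') * f s')"
  unfolding next_exp_def
  by (rule sum.mono_neutral_left) (auto simp: Post_def not_less ennreal_neg)

lemma next_exp_real:
  assumes "\<And>s'. s' \<in> Post P s a \<Longrightarrow> f s' \<noteq> \<infinity>"
  shows "next_exp P f s a = ennreal (\<Sum>s'\<in>Post P s a. P s a s' * enn2real (f s'))"
proof -
  have "next_exp P f s a = (\<Sum>s'\<in>Post P s a. ennreal (P s a s' * enn2real (f s')))"
    unfolding next_exp_def using assms
    by (intro sum.cong) (auto simp: ennreal_mult P_nonneg ennreal_enn2real_if)
  also have "\<dots> = ennreal (\<Sum>s'\<in>Post P s a. P s a s' * enn2real (f s'))"
    by (rule sum_ennreal) (simp add: P_nonneg)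
  finally show ?thesis .
qed

lemma next_exp_le_1:
  assumes "\<And>s'. f s' \<le> 1"
  shows "next_exp P f s a \<le> 1"
proof -
  have "next_exp P f s a \<le> (\<Sum>s'\<in>UNIV. ennreal (P s a s'))"
    unfolding next_exp_eq_sum_UNIV using assms by (intro sum_mono) (simp add: mult_left_le)
  also have "\<dots> \<le> 1"
    using sum_P_le_1 by (simp add: P_nonneg)
  finally show ?thesis .
qed

lemma next_exp_less_1:
  assumes "enabled P s a" "\<And>s'. f s' \<le> 1" "v \<in> Post P s a" "f v < 1"
  shows "next_exp P f s a < 1"
proof -
  have "(\<Sum>s'\<in>Post P s a. P s a s' * enn2real (f s')) < (\<Sum>s'\<in>Post P s a. P s a s' * 1)"
  proof (rule sum_strict_mono_ex1)
    have "enn2real (f s') \<le> 1" for s'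
      using assms(2)[of s'] by (simp add: enn2real_leI)
    then show "\<forall>s'\<in>Post P s a. P s a s' * enn2real (f s') \<le> P s a s' * 1"
      by (simp add: mult_left_le P_nonneg)
    show "\<exists>s'\<in>Post P s a. P s a s' * enn2real (f s') < P s a s' * 1"
    proof
      have "f v < top"
        using assms(4) ennreal_one_less_top by (rule order.strict_trans)
      then have "enn2real (f v) < 1"
        using assms(4) by (simp add: enn2real_less_iff[of "f v" 1])
      then show "P s a v * enn2real (f v) < P s a v * 1"
        using assms(3) by (simp add: Post_def)
    qed (fact assms(3))
  qed simp
  also have "\<dots> = 1"
    using enabled_sum_Post[OF assms(1)] by simp
  moreover have "f s' \<noteq> \<infinity>" for s'
    using assms(2)[of s'] by (auto simp: top_unique)
  ultimately show ?thesis
    by (simp add: next_exp_real)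
qed

lemma reach_prob_nontarget:
  assumes "s \<notin> T"
  shows "reach_prob P T \<sigma> s = next_exp P (reach_prob P T \<sigma>) s (\<sigma> s)"
proof -
  have "reach_prob P T \<sigma> s
      = (\<Sum>s'\<in>UNIV. \<integral>\<^sup>+ p. ennreal (path_prob P \<sigma> (s # p)) \<partial>count_space (reach_paths T s'))"
    unfolding reach_prob_def by (rule nn_integral_reach_paths_nontarget[OF assms])
  also have "\<dots> = (\<Sum>s'\<in>UNIV. \<integral>\<^sup>+ p. ennreal (P s (\<sigma> s) s') * ennreal (path_prob P \<sigma> p)
                                    \<partial>count_space (reach_paths T s'))"
    by (intro sum.cong refl nn_integral_cong)
      (auto simp: reach_paths_def path_prob_Cons ennreal_mult P_nonneg path_prob_nonneg)
  also have "\<dots> = (\<Sum>s'\<in>UNIV. ennreal (P s (\<sigma> s) s') * reach_prob P T \<sigma> s')"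
    unfolding reach_prob_def by (simp add: nn_integral_cmult)
  finally show ?thesis
    by (simp add: next_exp_eq_sum_UNIV)
qed

lemma partial_exp_rew_nontarget:
  assumes "s \<notin> T" and rew: "\<And>s. 0 \<le> rew s"
  shows "partial_exp_rew P T rew \<sigma> s =
    next_exp P (\<lambda>s'. ennreal (rew s) * reach_prob P T \<sigma> s' + partial_exp_rew P T rew \<sigma> s') s (\<sigma> s)"
proof -
  have "partial_exp_rew P T rew \<sigma> s
      = (\<Sum>s'\<in>UNIV. \<integral>\<^sup>+ p. ennreal (path_prob P \<sigma> (s # p)) * ennreal (path_rew rew (s # p))
                         \<partial>count_space (reach_paths T s'))"
    unfolding partial_exp_rew_def by (rule nn_integral_reach_paths_nontarget[OF assms(1)])
  also have "\<dots> = (\<Sum>s'\<in>UNIV. \<integral>\<^sup>+ p. ennreal (P s (\<sigma> s) s') *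
        (ennreal (rew s) * ennreal (path_prob P \<sigma> p)
          + ennreal (path_prob P \<sigma> p) * ennreal (path_rew rew p))
        \<partial>count_space (reach_paths T s'))"
    by (intro sum.cong refl nn_integral_cong)
      (auto simp: reach_paths_def path_prob_Cons path_rew_Cons ennreal_mult ennreal_plus P_nonneg
        path_prob_nonneg path_rew_nonneg rew algebra_simps)
  also have "\<dots> = (\<Sum>s'\<in>UNIV. ennreal (P s (\<sigma> s) s') *
        (ennreal (rew s) * reach_prob P T \<sigma> s' + partial_exp_rew P T rew \<sigma> s'))"
    unfolding reach_prob_def partial_exp_rew_def by (simp add: nn_integral_cmult nn_integral_add)
  finally show ?thesis
    by (simp add: next_exp_eq_sum_UNIV)
qed

lemma reach_prob_within_le_1: "reach_prob_within P T \<sigma> n s \<le> 1"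
proof (induction n arbitrary: s)
  case 0
  have "reach_prob_within P T \<sigma> 0 s = (\<integral>\<^sup>+ p. 0 \<partial>count_space (reach_paths T s))"
    unfolding reach_prob_within_def by (intro nn_integral_cong) (auto simp: reach_paths_def)
  then show ?case by simp
next
  case (Suc n)
  show ?case
  proof (cases "s \<in> T")
    case True
    then show ?thesis
      by (simp add: reach_prob_within_def nn_integral_reach_paths_target path_prob_def)
  next
    case False
    have "reach_prob_within P T \<sigma> (Suc n) s
        = (\<Sum>s'\<in>UNIV. \<integral>\<^sup>+ p. ennreal (P s (\<sigma> s) s') *
            (ennreal (path_prob P \<sigma> p) * indicator {p. length p \<le> n} p)
            \<partial>count_space (reach_paths T s'))"
      unfolding reach_prob_within_def nn_integral_reach_paths_nontarget[OF False]
      by (intro sum.cong refl nn_integral_cong)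
        (auto simp: reach_paths_def path_prob_Cons ennreal_mult P_nonneg path_prob_nonneg
          indicator_def)
    also have "\<dots> = next_exp P (reach_prob_within P T \<sigma> n) s (\<sigma> s)"
      unfolding reach_prob_within_def next_exp_eq_sum_UNIV by (simp add: nn_integral_cmult)
    also have "\<dots> \<le> 1"
      by (rule next_exp_le_1) (rule Suc.IH)
    finally show ?thesis .
  qed
qed

lemma reach_prob_le_1: "reach_prob P T \<sigma> s \<le> 1"
proof -
  let ?F = "\<lambda>n p. ennreal (path_prob P \<sigma> p) * indicator {p. length p \<le> n} p"
  have "incseq ?F"
    by (auto simp: incseq_def le_fun_def indicator_def intro!: mult_left_mono)
  moreover have "(SUP n. ?F n p) = ennreal (path_prob P \<sigma> p)" for p
  proof (rule antisym)
    show "(SUP n. ?F n p) \<le> ennreal (path_prob P \<sigma> p)"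
      by (rule SUP_least) (simp add: indicator_def)
    show "ennreal (path_prob P \<sigma> p) \<le> (SUP n. ?F n p)"
      by (rule SUP_upper2[of "length p"]) (simp_all add: indicator_def)
  qed
  ultimately have "reach_prob P T \<sigma> s = (SUP n. reach_prob_within P T \<sigma> n s)"
    unfolding reach_prob_def reach_prob_within_def
    by (simp add: nn_integral_monotone_convergence_SUP[symmetric])
  also have "\<dots> \<le> 1"
    by (rule SUP_least) (rule reach_prob_within_le_1)
  finally show ?thesis .
qed

lemma add_next_exp_real:
  assumes "0 \<le> c" "\<And>s'. s' \<in> Post P s a \<Longrightarrow> f s' \<noteq> \<infinity>"
  shows "ennreal c + next_exp P f s a = ennreal (c + (\<Sum>s'\<in>Post P s a. P s a s' * enn2real (f s')))"
  using assms by (simp add: next_exp_real P_nonneg sum_nonneg ennreal_plus)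

lemma enabled_nonempty: "{a. enabled P s a} \<noteq> {}"
  using is_mdp by (simp add: is_mdp_def)

lemma ex_certifying_action_OMax:
  assumes "D_op P T OMin r u \<le> r u" "x u \<le> E_op P T rew OMax x u"
  shows "\<exists>a. enabled P u a \<and> certifying_action P T rew x r u a"
proof (cases "u \<in> T")
  case True
  then have "r u = \<infinity>"
    using assms(1) by (simp add: D_op_def)
  then show ?thesis
    using enabled_nonempty True by (auto simp: certifying_action_def)
next
  case False
  obtain a where "enabled P u a" "D_op P T OMin r u = D_action P r u a"
    using opt_over_attained[OF _ enabled_nonempty, where o' = OMin and f = "D_action P r u"]
    by (auto simp: D_op_nontarget[OF False])
  moreover obtain b where "enabled P u b"
    and "E_op P T rew OMax x u = ennreal (rew u) + next_exp P x u b"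
    using opt_over_attained[OF _ enabled_nonempty, where o' = OMax and f = "next_exp P x u"]
    by (auto simp: E_op_nontarget[OF False])
  ultimately show ?thesis
    using assms by (cases "r u = \<infinity>") (auto simp: certifying_action_def)
qed

end

locale mdp_strategy = mdp P for P :: "'s::finite \<Rightarrow> 'a::finite \<Rightarrow> 's \<Rightarrow> real" +
  fixes T :: "'s set" and \<sigma> :: "'s \<Rightarrow> 'a"
  assumes strategy: "\<sigma> \<in> strategies P"
begin

lemma enabled_strategy: "enabled P s (\<sigma> s)"
  using strategy by (simp add: strategies_def)

definition succ :: "'s \<Rightarrow> 's \<Rightarrow> bool" where
  "succ u v \<longleftrightarrow> u \<notin> T \<and> v \<in> Post P u (\<sigma> u)"

lemma reach_prob_one_succ:
  assumes "reach_prob P T \<sigma> u = 1" "succ u v"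
  shows "reach_prob P T \<sigma> v = 1"
proof (rule ccontr)
  assume "reach_prob P T \<sigma> v \<noteq> 1"
  then have "reach_prob P T \<sigma> v < 1"
    using reach_prob_le_1 by (simp add: order.strict_iff_order)
  then have "next_exp P (reach_prob P T \<sigma>) u (\<sigma> u) < 1"
    using assms(2) by (intro next_exp_less_1[OF enabled_strategy reach_prob_le_1])
      (auto simp: succ_def)
  then show False
    using assms reach_prob_nontarget by (simp add: succ_def)
qed

lemma reach_prob_one_reachable:
  assumes "reach_prob P T \<sigma> s = 1" "succ\<^sup>*\<^sup>* s u"
  shows "reach_prob P T \<sigma> u = 1"
  using assms(2) by induction (use assms(1) reach_prob_one_succ in auto)

lemma path_prob_trap:
  assumes closed: "\<And>u v. u \<in> M \<Longrightarrow> succ u v \<Longrightarrow> v \<in> M" and "M \<inter> T = {}"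
  shows "p \<in> reach_paths T c \<Longrightarrow> c \<in> M \<Longrightarrow> path_prob P \<sigma> p = 0"
proof (induction p arbitrary: c)
  case Nil
  then show ?case by (simp add: reach_paths_def)
next
  case (Cons c' q)
  have "c \<notin> T"
    using Cons.prems(2) assms(2) by auto
  then obtain s' where "c' = c" and q: "q \<in> reach_paths T s'"
    using Cons.prems(1) by (auto simp: reach_paths_nontarget)
  moreover have "q \<noteq> []" "hd q = s'"
    using q by (auto simp: reach_paths_def)
  moreover have "P c (\<sigma> c) s' = 0 \<or> path_prob P \<sigma> q = 0"
  proof (cases "s' \<in> Post P c (\<sigma> c)")
    case True
    then have "s' \<in> M"
      using closed Cons.prems(2) \<open>c \<notin> T\<close> by (auto simp: succ_def)
    then show ?thesis
      using Cons.IH q by blast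
  next
    case False
    then show ?thesis
      using P_nonneg[of c "\<sigma> c" s'] by (simp add: Post_def)
  qed
  ultimately show ?case
    by (auto simp: path_prob_Cons)
qed

lemma reach_prob_trap:
  assumes "\<And>u v. u \<in> M \<Longrightarrow> succ u v \<Longrightarrow> v \<in> M" "M \<inter> T = {}" "c \<in> M"
  shows "reach_prob P T \<sigma> c = 0"
  unfolding reach_prob_def using path_prob_trap[OF assms(1,2) _ assms(3)]
  by (subst nn_integral_cong[where v = "\<lambda>_. 0"]) auto

text \<open>Otherwise the minimisers of f would form a trap avoiding T among states that reach T
  almost surely.\<close>

lemma reachable_argmin_escapes:
  fixes f :: "'s \<Rightarrow> 'b::linorder"
  assumes "reach_prob P T \<sigma> s = 1"
  obtains u where "succ\<^sup>*\<^sup>* s u" "\<And>v. succ\<^sup>*\<^sup>* s v \<Longrightarrow> f u \<le> f v"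
    and "u \<in> T \<or> (\<exists>v. succ u v \<and> f u < f v)"
proof -
  define R where "R = {v. succ\<^sup>*\<^sup>* s v}"
  define M where "M = {u \<in> R. \<forall>v\<in>R. f u \<le> f v}"
  have "s \<in> R"
    by (simp add: R_def)
  then have "Min (f ` R) \<in> f ` R"
    by (intro Min_in) auto
  then obtain c where "c \<in> R" "f c = Min (f ` R)"
    by (metis imageE)
  then have "c \<in> M"
    by (simp add: M_def)
  have "\<exists>u\<in>M. u \<in> T \<or> (\<exists>v. succ u v \<and> f u < f v)"
  proof (rule ccontr)
    assume "\<not> ?thesis"
    then have stuck: "u \<notin> T \<and> (\<forall>v. succ u v \<longrightarrow> f v \<le> f u)" if "u \<in> M" for u
      using that by (auto simp: not_less)
    have "v \<in> M" if "u \<in> M" "succ u v" for u v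
    proof -
      have "u \<in> R" and u_min: "\<forall>w\<in>R. f u \<le> f w"
        using that(1) by (auto simp: M_def)
      then have "v \<in> R"
        using that(2) by (simp add: R_def rtranclp.rtrancl_into_rtrancl)
      moreover have "f v \<le> f u"
        using stuck that by blast
      ultimately show ?thesis
        using u_min by (auto simp: M_def intro: order_trans)
    qed
    moreover have "M \<inter> T = {}"
      using stuck by blast
    ultimately have "reach_prob P T \<sigma> c = 0"
      using \<open>c \<in> M\<close> by (rule reach_prob_trap)
    moreover have "reach_prob P T \<sigma> c = 1"
      using reach_prob_one_reachable[OF assms] \<open>c \<in> R\<close> by (simp add: R_def)
    ultimately show False by simp
  qed
  then obtain u where "u \<in> R" "\<forall>v\<in>R. f u \<le> f v" "u \<in> T \<or> (\<exists>v. succ u v \<and> f u < f v)"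
    by (auto simp: M_def)
  then show thesis
    by (intro that) (auto simp: R_def)
qed

lemma reach_prob_less_1_if_rank_finite:
  fixes r :: "'s \<Rightarrow> enat"
  assumes rank: "\<And>u. r u < \<infinity> \<Longrightarrow> u \<notin> T \<and> D_action P r u (\<sigma> u) \<le> r u"
    and "r s < \<infinity>"
  shows "reach_prob P T \<sigma> s < 1"
proof (rule ccontr)
  assume "\<not> reach_prob P T \<sigma> s < 1"
  then have "reach_prob P T \<sigma> s = 1"
    using reach_prob_le_1[of T \<sigma> s] antisym not_less by blast
  then obtain u where reach_u: "succ\<^sup>*\<^sup>* s u" and u_min: "\<And>v. succ\<^sup>*\<^sup>* s v \<Longrightarrow> r u \<le> r v"
    and escape: "u \<in> T \<or> (\<exists>v. succ u v \<and> r u < r v)"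
    by (metis reachable_argmin_escapes)
  have "r u < \<infinity>"
    using u_min[OF rtranclp.rtrancl_refl] assms(2) by (rule order.strict_trans1)
  then have "u \<notin> T" and D_le: "D_action P r u (\<sigma> u) \<le> r u"
    using rank by auto
  then obtain v where "succ u v" "r u < r v"
    using escape by auto
  have "r u < D_action P r u (\<sigma> u)"
  proof (rule D_action_gt)
    fix w assume "w \<in> Post P u (\<sigma> u)"
    then have "succ u w"
      using \<open>u \<notin> T\<close> by (simp add: succ_def)
    then show "r u \<le> r w"
      using reach_u by (intro u_min) (rule rtranclp.rtrancl_into_rtrancl)
  qed (use \<open>succ u v\<close> \<open>r u < r v\<close> in \<open>auto simp: succ_def\<close>)
  then show False
    using D_le by simp
qed

lemma superharmonic_nonneg:
  fixes f :: "'s \<Rightarrow> real"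
  assumes "reach_prob P T \<sigma> s = 1"
    and target: "\<And>u. succ\<^sup>*\<^sup>* s u \<Longrightarrow> u \<in> T \<Longrightarrow> 0 \<le> f u"
    and super: "\<And>u. succ\<^sup>*\<^sup>* s u \<Longrightarrow> u \<notin> T \<Longrightarrow> (\<Sum>v\<in>Post P u (\<sigma> u). P u (\<sigma> u) v * f v) \<le> f u"
  shows "0 \<le> f s"
proof -
  obtain u where reach_u: "succ\<^sup>*\<^sup>* s u" and u_min: "\<And>v. succ\<^sup>*\<^sup>* s v \<Longrightarrow> f u \<le> f v"
    and escape: "u \<in> T \<or> (\<exists>v. succ u v \<and> f u < f v)"
    using assms(1) by (metis reachable_argmin_escapes)
  have "u \<in> T"
  proof (rule ccontr)
    assume "u \<notin> T"
    then obtain v where "succ u v" "f u < f v"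
      using escape by auto
    have post_ge: "f u \<le> f w" if "w \<in> Post P u (\<sigma> u)" for w
      using that \<open>u \<notin> T\<close> reach_u
      by (intro u_min) (auto simp: succ_def intro: rtranclp.rtrancl_into_rtrancl)
    have "f u = (\<Sum>w\<in>Post P u (\<sigma> u). P u (\<sigma> u) w * f u)"
      by (simp add: sum_distrib_right[symmetric] enabled_sum_Post[OF enabled_strategy])
    also have "\<dots> < (\<Sum>w\<in>Post P u (\<sigma> u). P u (\<sigma> u) w * f w)"
    proof (rule sum_strict_mono_ex1)
      show "\<forall>w\<in>Post P u (\<sigma> u). P u (\<sigma> u) w * f u \<le> P u (\<sigma> u) w * f w"
        using post_ge by (simp add: mult_left_mono P_nonneg)
      show "\<exists>w\<in>Post P u (\<sigma> u). P u (\<sigma> u) w * f u < P u (\<sigma> u) w * f w"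
        using \<open>succ u v\<close> \<open>f u < f v\<close> by (intro bexI[of _ v]) (auto simp: succ_def Post_def)
    qed simp
    also have "\<dots> \<le> f u"
      using super[OF reach_u \<open>u \<notin> T\<close>] .
    finally show False by simp
  qed
  then show ?thesis
    using target[OF reach_u] u_min[OF rtranclp.rtrancl_refl] by linarith
qed

lemma partial_exp_rew_finite_succ:
  assumes rew: "\<And>s. 0 \<le> rew s"
    and "partial_exp_rew P T rew \<sigma> u \<noteq> \<infinity>" "succ u v"
  shows "partial_exp_rew P T rew \<sigma> v \<noteq> \<infinity>"
proof
  assume v_inf: "partial_exp_rew P T rew \<sigma> v = \<infinity>"
  have "u \<notin> T" and v_post: "v \<in> Post P u (\<sigma> u)"
    using assms(3) by (auto simp: succ_def)
  have "\<infinity> = ennreal (P u (\<sigma> u) v) *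
      (ennreal (rew u) * reach_prob P T \<sigma> v + partial_exp_rew P T rew \<sigma> v)"
    using v_inf v_post by (simp add: Post_def ennreal_mult_eq_top_iff)
  also have "\<dots> \<le> partial_exp_rew P T rew \<sigma> u"
    unfolding partial_exp_rew_nontarget[OF \<open>u \<notin> T\<close> rew, where \<sigma> = \<sigma>] next_exp_def
    using v_post by (intro member_le_sum) auto
  finally show False
    using assms(2) by (simp add: top_unique)
qed

lemma partial_exp_rew_bellman:
  assumes rew: "\<And>s. 0 \<le> rew s"
    and "reach_prob P T \<sigma> u = 1" "u \<notin> T"
  shows "partial_exp_rew P T rew \<sigma> u
    = ennreal (rew u) + next_exp P (partial_exp_rew P T rew \<sigma>) u (\<sigma> u)"
proof -
  have "reach_prob P T \<sigma> v = 1" if "v \<in> Post P u (\<sigma> u)" for v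
    using assms(2) by (rule reach_prob_one_succ) (simp add: succ_def assms(3) that)
  then have "partial_exp_rew P T rew \<sigma> u = (\<Sum>v\<in>Post P u (\<sigma> u).
      ennreal (P u (\<sigma> u) v) * ennreal (rew u)
        + ennreal (P u (\<sigma> u) v) * partial_exp_rew P T rew \<sigma> v)"
    unfolding partial_exp_rew_nontarget[OF assms(3) rew, where \<sigma> = \<sigma>] next_exp_def
    by (intro sum.cong) (simp_all add: distrib_left)
  also have "\<dots> = (\<Sum>v\<in>Post P u (\<sigma> u). ennreal (P u (\<sigma> u) v)) * ennreal (rew u)
      + next_exp P (partial_exp_rew P T rew \<sigma>) u (\<sigma> u)"
    by (simp only: sum.distrib sum_distrib_right next_exp_def)
  also have "(\<Sum>v\<in>Post P u (\<sigma> u). ennreal (P u (\<sigma> u) v)) = 1"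
    using enabled_sum_Post[OF enabled_strategy] by (subst sum_ennreal) (simp_all add: P_nonneg)
  finally show ?thesis by simp
qed

lemma le_partial_exp_rew_if_bellman:
  assumes rew: "\<And>s. 0 \<le> rew s"
    and reach: "reach_prob P T \<sigma> s = 1" and fin: "partial_exp_rew P T rew \<sigma> s \<noteq> \<infinity>"
    and target: "\<And>u. u \<in> T \<Longrightarrow> x u = 0"
    and bellman: "\<And>u. succ\<^sup>*\<^sup>* s u \<Longrightarrow> u \<notin> T \<Longrightarrow> x u \<le> ennreal (rew u) + next_exp P x u (\<sigma> u)"
    and x_fin: "\<And>u. succ\<^sup>*\<^sup>* s u \<Longrightarrow> x u \<noteq> \<infinity>"
  shows "x s \<le> partial_exp_rew P T rew \<sigma> s"
proof -
  let ?Q = "partial_exp_rew P T rew \<sigma>"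
  have Q_fin: "?Q u \<noteq> \<infinity>" if "succ\<^sup>*\<^sup>* s u" for u
    using that by induction (use fin partial_exp_rew_finite_succ[OF rew] in auto)
  define f where "f u = enn2real (?Q u) - enn2real (x u)" for u
  have "0 \<le> f s"
  proof (rule superharmonic_nonneg[OF reach])
    fix u assume "succ\<^sup>*\<^sup>* s u" "u \<in> T"
    then show "0 \<le> f u"
      by (simp add: f_def target partial_exp_rew_target)
  next
    fix u assume u: "succ\<^sup>*\<^sup>* s u" "u \<notin> T"
    let ?E = "\<lambda>g. rew u + (\<Sum>v\<in>Post P u (\<sigma> u). P u (\<sigma> u) v * enn2real (g v))"
    have post: "succ\<^sup>*\<^sup>* s v" if "v \<in> Post P u (\<sigma> u)" for v
      using u that by (auto simp: succ_def intro: rtranclp.rtrancl_into_rtrancl)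
    have E_nonneg: "0 \<le> ?E g" for g
      by (simp add: rew sum_nonneg P_nonneg)
    have "enn2real (x u) \<le> ?E x"
      using bellman[OF u] x_fin post
      by (intro enn2real_leI E_nonneg) (simp add: add_next_exp_real rew)
    moreover have "enn2real (?Q u) = ?E ?Q"
      using partial_exp_rew_bellman[OF rew reach_prob_one_reachable[OF reach u(1)] u(2)] Q_fin post
      by (simp add: add_next_exp_real rew E_nonneg)
    ultimately show "(\<Sum>v\<in>Post P u (\<sigma> u). P u (\<sigma> u) v * f v) \<le> f u"
      by (simp add: f_def right_diff_distrib sum_subtractf)
  qed
  then show ?thesis
    using x_fin[OF rtranclp.rtrancl_refl] fin
    by (simp add: f_def ennreal_enn2real_if flip: ennreal_le_iff)
qed

lemma le_exp_rew_if_certifying: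
  fixes x :: "'s \<Rightarrow> ennreal" and r :: "'s \<Rightarrow> enat"
  assumes rew: "\<And>s. 0 \<le> rew s"
    and rank_nontarget: "\<And>u. r u < \<infinity> \<Longrightarrow> u \<notin> T"
    and certifying: "\<And>u. certifying_action P T rew x r u (\<sigma> u)"
    and target: "\<And>u. u \<in> T \<Longrightarrow> x u = 0"
    and x_fin: "\<And>u. x u = \<infinity> \<Longrightarrow> r u < \<infinity>"
  shows "x s \<le> exp_rew P T rew \<sigma> s"
proof (cases "reach_prob P T \<sigma> s = 1")
  case False
  then show ?thesis
    using reach_prob_le_1[of T \<sigma> s] by (simp add: exp_rew_def)
next
  case True
  have "r u < \<infinity> \<Longrightarrow> u \<notin> T \<and> D_action P r u (\<sigma> u) \<le> r u" for u
    using rank_nontarget certifying by (simp add: certifying_action_def)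
  then have r_inf: "r u = \<infinity>" if "succ\<^sup>*\<^sup>* s u" for u
    using reach_prob_less_1_if_rank_finite reach_prob_one_reachable[OF True that]
    by (metis enat_ord_simps(4) less_irrefl)
  have "x s \<le> partial_exp_rew P T rew \<sigma> s" if "partial_exp_rew P T rew \<sigma> s \<noteq> \<infinity>"
  proof (rule le_partial_exp_rew_if_bellman[OF rew True that target])
    fix u assume "succ\<^sup>*\<^sup>* s u"
    then show "x u \<noteq> \<infinity>"
      using x_fin r_inf by force
    show "u \<notin> T \<Longrightarrow> x u \<le> ennreal (rew u) + next_exp P x u (\<sigma> u)"
      using certifying[of u] r_inf[OF \<open>succ\<^sup>*\<^sup>* s u\<close>] by (simp add: certifying_action_def)
  qed
  then show ?thesis
    using True
    by (cases "partial_exp_rew P T rew \<sigma> s = \<infinity>") (simp_all add: exp_rew_eq_partial_exp_rew)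
qed

end

theorem proposition7:
  fixes P :: "'s::finite \<Rightarrow> 'a::finite \<Rightarrow> 's \<Rightarrow> real"
    and T :: "'s set" and rew :: "'s \<Rightarrow> real" and o' :: opt
    and x :: "'s \<Rightarrow> ennreal" and r :: "'s \<Rightarrow> enat"
  assumes "is_mdp P"
    and "\<And>s. rew s \<ge> 0"
    and "\<And>s. D_op P T (dual o') r s \<le> r s"
    and "\<And>s. x s \<le> E_op P T rew o' x s"
    and "\<And>s. x s = \<infinity> \<Longrightarrow> r s < \<infinity>"
  shows "\<forall>s. exp_opt P T rew o' s \<ge> x s"
proof
  fix s
  interpret mdp P
    using assms(1) by unfold_locales
  have rank_nontarget: "u \<notin> T" if "r u < \<infinity>" for u
    using assms(3)[of u] that by (auto simp: D_op_def)
  have x_target: "x u = 0" if "u \<in> T" for u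
    using assms(4)[of u] that by (simp add: E_op_def)
  have x_le: "x s \<le> exp_rew P T rew \<sigma> s"
    if "\<sigma> \<in> strategies P" "\<And>u. certifying_action P T rew x r u (\<sigma> u)" for \<sigma>
  proof -
    interpret mdp_strategy P T \<sigma>
      using that(1) by unfold_locales
    show ?thesis
      using assms(2) rank_nontarget that(2) x_target assms(5) by (rule le_exp_rew_if_certifying)
  qed
  show "x s \<le> exp_opt P T rew o' s"
  proof (cases o')
    case OMin
    have "x s \<le> exp_rew P T rew \<sigma> s" if "\<sigma> \<in> strategies P" for \<sigma>
      using that certifying_action_OMin[OF assms(3,4)[unfolded OMin dual.simps]]
      by (intro x_le) (simp_all add: strategies_def)
    then show ?thesis
      using OMin by (simp add: exp_opt_def opt_over_def INF_greatest)
  next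
    case OMax
    obtain \<sigma> where "\<forall>u. enabled P u (\<sigma> u) \<and> certifying_action P T rew x r u (\<sigma> u)"
      using ex_certifying_action_OMax[OF assms(3,4)[unfolded OMax dual.simps]] by metis
    then show ?thesis
      using OMax x_le by (auto simp: exp_opt_def opt_over_def strategies_def intro: SUP_upper2)
  qed
qed

end
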